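(* For $\lambda>0$ let $\eta = \eta(\lambda) = (\lambda-1)\sqrt{\frac{2 (\lambda-1-\ln \lambda)}{(\lambda-1)^{2}}}$ (principal branch of the root). Let $\gamma_j$ be the Stirling coefficients $\gamma_{j} = \frac{(-1)^{j}}{2^{j} \, j!} \Big[ \frac{d^{2j}}{dx^{2j}} \Big( \frac{1}{2}\frac{x^{2}}{x-\ln(1+x)} \Big)^{j+\frac{1}{2}} \Big]_{x=0}$, and define functions $c_j(\eta)$ by $c_{0}(\eta) = \frac{1}{\lambda-1}-\frac{1}{\eta}$ and $c_{j}(\eta) = \frac{1}{\eta} \frac{d}{d\eta}c_{j-1}(\eta) + \frac{\gamma_{j}}{\lambda-1}$ for $j \geq 1$ (with $\lambda$ regarded as a function of $\eta$). Then for every $j \geq 0$, $$c_j(\eta) = \varphi_j(\lambda) - S(\varphi_j(\lambda)), \qquad \varphi_j(\lambda) := \frac{(-1)^{j+1} (2j-1)!!}{\eta^{2j+1}},$$ where $S(\varphi_j(\lambda))$ denotes the singular part of $\varphi_j$ at $\lambda = 1$, i.e. the sum of the terms with negative powers of $\lambda-1$ in the Laurent expansion of $\varphi_j(\lambda)$ at $\lambda=1$.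
   Context: $(2j-1)!!=1\cdot3\cdots(2j-1)$, with $(-1)!!=1$. The map $\lambda\mapsto\eta$ is real-analytic and increasing with $\eta(1)=0$, $\eta'(1)=1$, so $\eta^{-(2j+1)}$ has a pole of order $2j+1$ at $\lambda=1$. (These $c_j$ are the coefficients in Temme's uniform asymptotic expansion $R_a(\eta)\sim \frac{e^{-a\eta^2/2}}{\sqrt{2\pi a}}\sum_j c_j(\eta)a^{-j}$ of the remainder in $\gamma(a,z)/\Gamma(a)=\frac12\mathrm{erfc}(-\eta\sqrt{a/2})-R_a(\eta)$, $\lambda=z/a$.) *)

theory Defs
  imports "HOL-Complex_Analysis.Complex_Analysis"
begin

text \<open>eta(lambda) for real lambda > 0 (at lambda = 1 the formula gives 0, the correct value).\<close>
definition eta :: "real \<Rightarrow> real" where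
  "eta l = (l - 1) * sqrt (2 * (l - 1 - ln l) / (l - 1)^2)"

text \<open>The same formula over the complex numbers (principal branches of Ln and csqrt);
  it agrees with eta on the positive reals and is used to form the Laurent expansion at 1.\<close>
definition eta_c :: "complex \<Rightarrow> complex" where
  "eta_c z = (z - 1) * csqrt (2 * (z - 1 - Ln z) / (z - 1)^2)"

definition lam :: "real \<Rightarrow> real" where
  "lam e = inv_into {0<..} eta e"

text \<open>(2j-1)!! = 1*3*...*(2j-1), with (-1)!! = 1.\<close>
definition odd_dfact :: "nat \<Rightarrow> real" where
  "odd_dfact j = (\<Prod>i<j. real (2*i+1))"

definition stirling_base :: "real \<Rightarrow> real" where
  "stirling_base x = (if x = 0 then 1 else (1/2) * x^2 / (x - ln (1 + x)))"

definition stirling_gamma :: "nat \<Rightarrow> real" where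
  "stirling_gamma j = (-1)^j / (2^j * fact j) *
      (deriv ^^ (2*j)) (\<lambda>x. stirling_base x powr (real j + 1/2)) 0"

fun c_fun :: "nat \<Rightarrow> real \<Rightarrow> real" where
  "c_fun 0 = (\<lambda>e. 1 / (lam e - 1) - 1 / e)"
| "c_fun (Suc j) = (\<lambda>e. 1 / e * deriv (c_fun j) e + stirling_gamma (Suc j) / (lam e - 1))"

definition phi :: "nat \<Rightarrow> real \<Rightarrow> real" where
  "phi j l = (-1)^(j+1) * odd_dfact j / eta l ^ (2*j+1)"

definition phi_c :: "nat \<Rightarrow> complex \<Rightarrow> complex" where
  "phi_c j z = of_real ((-1)^(j+1) * odd_dfact j) / eta_c z ^ (2*j+1)"

definition singular_part :: "(complex \<Rightarrow> complex) \<Rightarrow> complex \<Rightarrow> complex \<Rightarrow> complex" where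
  "singular_part f z0 w =
     (let F = laurent_expansion f z0
      in \<Sum>k\<in>{fls_subdegree F..<0}. fls_nth F k * (w - z0) powi k)"

end

theory Submission
  imports Defs "HOL-Real_Asymp.Real_Asymp"
begin

text \<open>Near \<open>\<lambda> = 1\<close> we have \<open>eta = (\<lambda> - 1) h\<close> with \<open>h\<close> holomorphic and \<open>h(1) = 1\<close>, so
  \<open>phi_j = C_j h\<^bsup>-(2j+1)\<^esup> / (\<lambda> - 1)\<^bsup>2j+1\<^esup>\<close>, and by Cauchy's formula its residue at 1 is
  \<open>C_j (h\<^bsup>-(2j+1)\<^esup>)\<^bsup>(2j)\<^esup>(1) / (2j)! = -gamma_j\<close>.  From \<open>eta eta' = 1 - 1/\<lambda>\<close> we get
  \<open>phi_j' = (\<lambda> - 1)/\<lambda> phi_(j+1)\<close>.  Writing \<open>phi_j = S_j + R_j\<close> with \<open>S_j\<close> the singular part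
  and \<open>R_j\<close> holomorphic at 1, this gives \<open>phi_(j+1) = \<lambda>/(\<lambda> - 1) (S_j' + R_j')\<close>; comparing
  residues yields \<open>R_j'(1) = -gamma_(j+1)\<close>, hence \<open>S_(j+1) = \<lambda>/(\<lambda> - 1) S_j' - gamma_(j+1)/(\<lambda> - 1)\<close>.
  Consequently \<open>phi_j - S_j\<close> satisfies the recursion defining \<open>c_j\<close> once
  \<open>d\<lambda>/d eta = eta \<lambda>/(\<lambda> - 1)\<close> is substituted; since \<open>phi_j - S_j\<close> is real on the positive
  axis, its complex derivative there is the real one.\<close>

lemma holomorphic_quotient_at_zero:
  assumes "f holomorphic_on S" "open S" "f a = 0"
  obtains g where "g holomorphic_on S" "g a = deriv f a" "\<And>z. z \<noteq> a \<Longrightarrow> g z = f z / (z - a)"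
proof
  show "(\<lambda>z. if z = a then deriv f a else (f z - f a) / (z - a)) holomorphic_on S"
    using pole_lemma_open[OF assms(1,2)] .
qed (use assms(3) in auto)

lemma has_field_derivative_real_restriction:
  fixes G :: "complex \<Rightarrow> complex"
  assumes G: "(G has_field_derivative G') (at (of_real x))"
    and g: "\<forall>\<^sub>F t in nhds x. G (of_real t) = of_real (g t)"
  shows "(g has_real_derivative Re G') (at x)" and "G' = of_real (Re G')"
proof -
  have "((\<lambda>t. G (of_real t)) has_vector_derivative G') (at x)"
    using G by (rule has_vector_derivative_real_field)
  then have v: "((\<lambda>t. of_real (g t)) has_vector_derivative G') (at x)"
    using g by (subst (asm) has_vector_derivative_cong_ev)
      (auto elim: eventually_mono dest: eventually_nhds_x_imp_x)
  have "((\<lambda>t. Re (of_real (g t))) has_vector_derivative Re G') (at x)"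
    using bounded_linear.has_vector_derivative[OF bounded_linear_Re v] .
  then show "(g has_real_derivative Re G') (at x)"
    by (simp add: has_real_derivative_iff_has_vector_derivative)
  have "((\<lambda>t. Im (of_real (g t) :: complex)) has_vector_derivative Im G') (at x)"
    using bounded_linear.has_vector_derivative[OF bounded_linear_Im v] .
  then have "((\<lambda>t. 0) has_real_derivative Im G') (at x)"
    by (simp add: has_real_derivative_iff_has_vector_derivative)
  then have "Im G' = 0"
    using DERIV_const DERIV_unique by blast
  then show "G' = of_real (Re G')"
    by (simp add: complex_eq_iff)
qed

lemma higher_deriv_real_restriction:
  fixes G :: "complex \<Rightarrow> complex"
  assumes G: "G holomorphic_on ball 0 r"
    and g: "\<And>t. \<bar>t\<bar> < r \<Longrightarrow> G (of_real t) = of_real (g t)"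
    and x: "\<bar>x\<bar> < r"
  shows "(deriv ^^ n) G (of_real x) = of_real ((deriv ^^ n) g x)"
  using x
proof (induction n arbitrary: x)
  case 0
  then show ?case
    using g by simp
next
  case (Suc n)
  have "(deriv ^^ n) G holomorphic_on ball 0 r"
    using G by (rule holomorphic_higher_deriv) simp
  moreover have "complex_of_real x \<in> ball 0 r"
    using Suc.prems by (simp add: dist_norm)
  ultimately have d:
    "((deriv ^^ n) G has_field_derivative (deriv ^^ Suc n) G (of_real x)) (at (of_real x))"
    by (simp add: holomorphic_derivI)
  have "\<forall>\<^sub>F t in nhds x. t \<in> {-r<..<r}"
    using Suc.prems by (intro eventually_nhds_in_open) auto
  then have "\<forall>\<^sub>F t in nhds x. (deriv ^^ n) G (of_real t) = of_real ((deriv ^^ n) g t)"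
    by eventually_elim (simp add: Suc.IH abs_less_iff)
  from has_field_derivative_real_restriction[OF d this]
  show ?case
    by (metis DERIV_imp_deriv comp_apply funpow.simps(2))
qed

section \<open>Laurent polynomials and singular parts\<close>

definition laurent_poly_upto :: "complex \<Rightarrow> int \<Rightarrow> (complex \<Rightarrow> complex) \<Rightarrow> bool" where
  "laurent_poly_upto z0 m T \<longleftrightarrow>
     (\<exists>K c. finite K \<and> K \<subseteq> {..m} \<and> (\<forall>z. z \<noteq> z0 \<longrightarrow> T z = (\<Sum>k\<in>K. c k * (z - z0) powi k)))"

lemma laurent_poly_upto_mono: "laurent_poly_upto z0 m T \<Longrightarrow> m \<le> m' \<Longrightarrow> laurent_poly_upto z0 m' T"
  unfolding laurent_poly_upto_def by (meson atMost_subset_iff order_trans)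

lemma laurent_poly_upto_cong:
  assumes "laurent_poly_upto z0 m T" "\<And>z. z \<noteq> z0 \<Longrightarrow> T z = T' z"
  shows "laurent_poly_upto z0 m T'"
  using assms unfolding laurent_poly_upto_def by metis

lemma laurent_poly_upto_monomial: "k \<le> m \<Longrightarrow> laurent_poly_upto z0 m (\<lambda>z. a * (z - z0) powi k)"
  unfolding laurent_poly_upto_def by (intro exI[of _ "{k}"] exI[of _ "\<lambda>_. a"]) auto

lemma laurent_poly_upto_add:
  assumes "laurent_poly_upto z0 m T1" "laurent_poly_upto z0 m T2"
  shows "laurent_poly_upto z0 m (\<lambda>z. T1 z + T2 z)"
proof -
  obtain K1 c1 where 1: "finite K1" "K1 \<subseteq> {..m}" "\<And>z. z \<noteq> z0 \<Longrightarrow> T1 z = (\<Sum>k\<in>K1. c1 k * (z - z0) powi k)"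
    using assms(1) unfolding laurent_poly_upto_def by blast
  obtain K2 c2 where 2: "finite K2" "K2 \<subseteq> {..m}" "\<And>z. z \<noteq> z0 \<Longrightarrow> T2 z = (\<Sum>k\<in>K2. c2 k * (z - z0) powi k)"
    using assms(2) unfolding laurent_poly_upto_def by blast
  define c where "c k = (if k \<in> K1 then c1 k else 0) + (if k \<in> K2 then c2 k else 0)" for k
  have "T1 z + T2 z = (\<Sum>k\<in>K1 \<union> K2. c k * (z - z0) powi k)" if "z \<noteq> z0" for z
  proof -
    have "(\<Sum>k\<in>K1 \<union> K2. c k * (z - z0) powi k)
        = (\<Sum>k\<in>K1 \<union> K2. if k \<in> K1 then c1 k * (z - z0) powi k else 0)
        + (\<Sum>k\<in>K1 \<union> K2. if k \<in> K2 then c2 k * (z - z0) powi k else 0)"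
      unfolding c_def sum.distrib[symmetric] by (intro sum.cong) (auto simp: distrib_right)
    also have "\<dots> = T1 z + T2 z"
      using 1 2 that by (simp add: sum.If_cases Int_absorb1)
    finally show ?thesis ..
  qed
  then show ?thesis
    unfolding laurent_poly_upto_def using 1 2 by (intro exI[of _ "K1 \<union> K2"] exI[of _ c]) auto
qed

lemma laurent_poly_upto_divide:
  assumes "laurent_poly_upto z0 m T"
  shows "laurent_poly_upto z0 (m - 1) (\<lambda>z. T z / (z - z0))"
proof -
  obtain K c where K: "finite K" "K \<subseteq> {..m}" "\<And>z. z \<noteq> z0 \<Longrightarrow> T z = (\<Sum>k\<in>K. c k * (z - z0) powi k)"
    using assms unfolding laurent_poly_upto_def by blast
  have "inj_on (\<lambda>k::int. k - 1) K"
    by (auto simp: inj_on_def)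
  then have "T z / (z - z0) = (\<Sum>k\<in>(\<lambda>k. k - 1) ` K. c (k + 1) * (z - z0) powi k)" if "z \<noteq> z0" for z
    using K(3)[OF that] that by (simp add: sum.reindex sum_divide_distrib power_int_diff)
  then show ?thesis
    unfolding laurent_poly_upto_def using K
    by (intro exI[of _ "(\<lambda>k. k - 1) ` K"] exI[of _ "\<lambda>k. c (k + 1)"]) auto
qed

lemma laurent_poly_upto_deriv:
  assumes "laurent_poly_upto z0 m T"
  shows "laurent_poly_upto z0 (m - 1) (deriv T)"
    and "z \<noteq> z0 \<Longrightarrow> (T has_field_derivative deriv T z) (at z)"
proof -
  obtain K c where K: "finite K" "K \<subseteq> {..m}" "\<And>z. z \<noteq> z0 \<Longrightarrow> T z = (\<Sum>k\<in>K. c k * (z - z0) powi k)"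
    using assms unfolding laurent_poly_upto_def by blast
  define T' where "T' z = (\<Sum>k\<in>K. (c k * of_int k) * (z - z0) powi k) / (z - z0)" for z
  have T': "(T has_field_derivative T' z) (at z)" if "z \<noteq> z0" for z
  proof -
    have "((\<lambda>z. \<Sum>k\<in>K. c k * (z - z0) powi k) has_field_derivative
           (\<Sum>k\<in>K. c k * (of_int k * (z - z0) powi (k - 1) * 1))) (at z)"
      using that by (intro DERIV_sum DERIV_cmult DERIV_power_int) (auto intro!: derivative_eq_intros)
    also have "(\<Sum>k\<in>K. c k * (of_int k * (z - z0) powi (k - 1) * 1)) = T' z"
      unfolding T'_def using that by (simp add: sum_divide_distrib power_int_diff mult.assoc)
    finally show ?thesis
      by (rule has_field_derivative_transform_within_open[where S="- {z0}"]) (use that K in auto)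
  qed
  then show "z \<noteq> z0 \<Longrightarrow> (T has_field_derivative deriv T z) (at z)"
    using DERIV_imp_deriv by fastforce
  have "laurent_poly_upto z0 m (\<lambda>z. \<Sum>k\<in>K. (c k * of_int k) * (z - z0) powi k)"
    unfolding laurent_poly_upto_def using K by (intro exI[of _ K] exI[of _ "\<lambda>k. c k * of_int k"]) auto
  then have "laurent_poly_upto z0 (m - 1) T'"
    unfolding T'_def by (rule laurent_poly_upto_divide)
  moreover have "deriv T z = T' z" if "z \<noteq> z0" for z
    using T'[OF that] by (rule DERIV_imp_deriv)
  ultimately show "laurent_poly_upto z0 (m - 1) (deriv T)"
    unfolding laurent_poly_upto_def by simp
qed

lemma laurent_poly_upto_contour_integral:
  assumes "laurent_poly_upto z0 (-2) T" "r > 0"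
  shows "(T has_contour_integral 0) (circlepath z0 r)"
proof -
  obtain K c where K: "finite K" "K \<subseteq> {..-2}" "\<And>z. z \<noteq> z0 \<Longrightarrow> T z = (\<Sum>k\<in>K. c k * (z - z0) powi k)"
    using assms(1) unfolding laurent_poly_upto_def by blast
  have "((\<lambda>z. c k * (z - z0) powi k) has_contour_integral 0) (circlepath z0 r)" if "k \<in> K" for k
  proof -
    define n where "n = nat (-k) - 1"
    have n: "n \<ge> 1" "k = - int (Suc n)"
      using K(2) that by (auto simp: n_def)
    have "((\<lambda>z. c k / (z - z0) ^ Suc n) has_contour_integral
           (2 * pi * \<i>) / fact n * (deriv ^^ n) (\<lambda>_. c k) z0) (circlepath z0 r)"
      by (rule Cauchy_has_contour_integral_higher_derivative_circlepath) (use assms(2) in auto)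
    moreover have "(z - z0) powi k = inverse ((z - z0) ^ Suc n)" for z
      by (simp only: n(2) power_int_minus power_int_of_nat)
    ultimately show ?thesis
      using n by (simp add: divide_inverse)
  qed
  then have "((\<lambda>z. \<Sum>k\<in>K. c k * (z - z0) powi k) has_contour_integral 0) (circlepath z0 r)"
    using has_contour_integral_sum[OF K(1), of _ "\<lambda>_. 0"] by simp
  then show ?thesis
  proof (rule has_contour_integral_eq)
    fix z
    assume "z \<in> path_image (circlepath z0 r)"
    then have "z \<noteq> z0"
      using assms(2) by (auto simp: path_image_circlepath)
    then show "(\<Sum>k\<in>K. c k * (z - z0) powi k) = T z"
      using K(3) by simp
  qed
qed

lemma laurent_poly_upto_singular_part: "laurent_poly_upto z0 (-1) (singular_part f z0)"
  unfolding laurent_poly_upto_def singular_part_def Let_def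
  by (intro exI[of _ "{fls_subdegree (laurent_expansion f z0)..<0}"] exI) auto

text \<open>The Laurent expansion of \<open>f\<close> at \<open>z0\<close> is that of \<open>T\<close> plus the power series of \<open>R\<close>.\<close>
lemma singular_part_eqI:
  assumes T: "laurent_poly_upto z0 (-1) T" and R: "R holomorphic_on ball z0 r" and "r > 0"
    and f: "\<And>z. z \<in> ball z0 r \<Longrightarrow> z \<noteq> z0 \<Longrightarrow> f z = T z + R z" and "w \<noteq> z0"
  shows "singular_part f z0 w = T w"
proof -
  obtain K c where K: "finite K" "K \<subseteq> {..-1}" "\<And>z. z \<noteq> z0 \<Longrightarrow> T z = (\<Sum>k\<in>K. c k * (z - z0) powi k)"
    using T unfolding laurent_poly_upto_def by blast
  define F where "F = (\<Sum>k\<in>K. fls_const (c k) * fls_X_intpow k) + fps_to_fls (fps_expansion R z0)"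
  have "R analytic_on {z0}"
    using R \<open>r > 0\<close> unfolding analytic_at by (intro exI[of _ "ball z0 r"]) auto
  then have "(\<lambda>x. R (z0 + x)) has_laurent_expansion fps_to_fls (fps_expansion R z0)"
    by (intro has_laurent_expansion_fps analytic_at_imp_has_fps_expansion)
  then have expansion: "(\<lambda>x. (\<Sum>k\<in>K. c k * x powi k) + R (z0 + x)) has_laurent_expansion F"
    unfolding F_def
    by (intro has_laurent_expansion_add has_laurent_expansion_sum has_laurent_expansion_cmult_left
        has_laurent_expansion_fps_X_power_int)
  have "\<forall>\<^sub>F x in at (0::complex). x \<in> ball 0 r - {0}"
    using \<open>r > 0\<close> by (intro eventually_at_in_open) auto
  then have ev: "\<forall>\<^sub>F x in at 0. (\<Sum>k\<in>K. c k * x powi k) + R (z0 + x) = f (z0 + x)"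
    by eventually_elim (auto simp: f K(3) dist_norm)
  have "(\<lambda>x. f (z0 + x)) has_laurent_expansion F"
    using has_laurent_expansion_cong[OF ev refl] expansion by simp
  then have F: "laurent_expansion f z0 = F"
    by (rule laurent_expansion_eqI)
  have nth: "fls_nth F k = (if k \<in> K then c k else 0)" if "k < 0" for k
  proof -
    have "fls_nth F k = (\<Sum>i\<in>K. if k = i then c i else 0)"
      using that by (simp add: F_def fls_nth_sum fls_X_intpow_times_conv_shift)
    also have "\<dots> = (if k \<in> K then c k else 0)"
      using K(1) by (simp add: sum.delta)
    finally show ?thesis .
  qed
  define A where "A = {fls_subdegree F..<0}"
  have "singular_part f z0 w = (\<Sum>k\<in>A. fls_nth F k * (w - z0) powi k)"
    by (simp add: singular_part_def F A_def)
  also have "\<dots> = (\<Sum>k\<in>A. if k \<in> K then c k * (w - z0) powi k else 0)"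
    by (intro sum.cong) (auto simp: A_def nth)
  also have "\<dots> = (\<Sum>k\<in>A \<inter> K. c k * (w - z0) powi k)"
    by (simp add: sum.inter_restrict A_def)
  also have "\<dots> = (\<Sum>k\<in>K. c k * (w - z0) powi k)"
  proof (rule sum.mono_neutral_left)
    show "\<forall>i\<in>K - A \<inter> K. c i * (w - z0) powi i = 0"
    proof
      fix i
      assume i: "i \<in> K - A \<inter> K"
      then have "i < 0" "i < fls_subdegree F"
        using K(2) by (auto simp: A_def)
      then show "c i * (w - z0) powi i = 0"
        using nth[of i] i by simp
    qed
  qed (use K in auto)
  also have "\<dots> = T w"
    using K(3) \<open>w \<noteq> z0\<close> by simp
  finally show ?thesis .
qed

section \<open>The real function \<open>eta\<close> and its inverse\<close>

lemma ln_less_minus_one: "0 < x \<Longrightarrow> x \<noteq> 1 \<Longrightarrow> ln x < x - (1::real)"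
  using ln_le_minus_one[of x] ln_eq_minus_one[of x] by fastforce

lemma eta_squared: "x > 0 \<Longrightarrow> eta x ^ 2 = 2 * (x - 1 - ln x)"
proof (cases "x = 1")
  case False
  assume "x > 0"
  then have "2 * (x - 1 - ln x) / (x - 1)^2 \<ge> 0"
    using ln_less_minus_one[of x] False by simp
  then show ?thesis
    using False by (simp add: eta_def power_mult_distrib)
qed (simp add: eta_def)

lemma eta_1 [simp]: "eta 1 = 0"
  by (simp add: eta_def)

lemma eta_pos: "x > 1 \<Longrightarrow> eta x > 0"
  using ln_less_minus_one[of x] by (simp add: eta_def)

lemma eta_neg: "0 < x \<Longrightarrow> x < 1 \<Longrightarrow> eta x < 0"
  using ln_less_minus_one[of x] by (simp add: eta_def mult_neg_pos)

lemma eta_nonzero: "x > 0 \<Longrightarrow> x \<noteq> 1 \<Longrightarrow> eta x \<noteq> 0"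
  using eta_pos[of x] eta_neg[of x] by (cases "x < 1") auto

lemma diff_minus_ln_strict_mono_ge_1:
  assumes "1 \<le> x" "x < y"
  shows "x - 1 - ln x < y - 1 - ln (y::real)"
proof -
  have "ln (y/x) < y/x - 1"
    using assms by (intro ln_less_minus_one) auto
  also have "\<dots> = (y - x) / x"
    using assms by (simp add: field_simps)
  also have "\<dots> \<le> y - x"
    using assms by (simp add: divide_le_eq)
  finally show ?thesis
    using assms by (simp add: ln_div)
qed

lemma diff_minus_ln_strict_antimono_le_1:
  assumes "0 < x" "x < y" "y \<le> 1"
  shows "y - 1 - ln y < x - 1 - ln (x::real)"
proof -
  have "ln (x/y) < x/y - 1"
    using assms by (intro ln_less_minus_one) auto
  also have "\<dots> \<le> x - y"
  proof -
    have "(y - x) * y \<le> y - x"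
      using assms by (intro mult_right_le_one_le) auto
    then show ?thesis
      using assms by (simp add: field_simps)
  qed
  finally show ?thesis
    using assms by (simp add: ln_div)
qed

lemma eta_strict_mono: "strict_mono_on {0<..} eta"
proof (rule strict_mono_onI)
  fix x y :: real
  assume "x \<in> {0<..}" "y \<in> {0<..}" "x < y"
  then have xy: "0 < x" "x < y"
    by auto
  consider "1 \<le> x" | "y \<le> 1" | "x < 1" "1 < y"
    by linarith
  then show "eta x < eta y"
  proof cases
    case 1
    have "eta x ^ 2 < eta y ^ 2"
      using xy eta_squared diff_minus_ln_strict_mono_ge_1[OF 1 xy(2)] by simp
    moreover have "eta y > 0"
      using 1 xy eta_pos by simp
    ultimately show ?thesis
      using power_less_imp_less_base[of "eta x" 2 "eta y"] by simp
  next
    case 2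
    have "eta y ^ 2 < eta x ^ 2"
      using xy eta_squared diff_minus_ln_strict_antimono_le_1[OF xy 2] by simp
    moreover have "eta x < 0"
      using 2 xy eta_neg by simp
    ultimately show ?thesis
      using power_less_imp_less_base[of "-eta y" 2 "-eta x"] by simp
  next
    case 3
    then show ?thesis
      using eta_pos eta_neg xy by fastforce
  qed
qed

lemma lam_eta: "x > 0 \<Longrightarrow> lam (eta x) = x"
  unfolding lam_def using strict_mono_on_imp_inj_on[OF eta_strict_mono]
  by simp

text \<open>Solve \<open>2 (x - 1 - ln x) = e\<^sup>2\<close> by the intermediate value theorem, on the side of 1
  given by the sign of \<open>e\<close>.\<close>
lemma eta_surj: "\<exists>x>0. eta x = e"
proof -
  define f where "f = (\<lambda>t::real. 2 * (t - 1 - ln t))"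
  have cont: "continuous_on {a..b} f" if "a > 0" for a b
    unfolding f_def using that by (intro continuous_intros) auto
  have f1: "f 1 \<le> e^2"
    by (simp add: f_def)
  have root: "eta x = e" if "x > 0" "f x = e^2" "0 < e \<longleftrightarrow> 1 < x" "e \<noteq> 0" for x
  proof -
    have "x \<noteq> 1"
      using that by (auto simp: f_def)
    then have "0 < eta x \<longleftrightarrow> 0 < e"
      using that eta_pos[of x] eta_neg[of x] by linarith
    moreover have "eta x ^ 2 = e ^ 2"
      using that eta_squared by (simp add: f_def)
    ultimately show ?thesis
      using \<open>e \<noteq> 0\<close> by (auto simp: power2_eq_iff)
  qed
  consider "e = 0" | "e > 0" | "e < 0"
    by linarith
  then show ?thesis
  proof cases
    case 1
    then show ?thesis
      by (intro exI[of _ 1]) auto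
  next
    case 2
    have "f (exp e) \<ge> e^2"
      using exp_lower_Taylor_quadratic[of e] 2 by (simp add: f_def)
    then obtain x where "1 \<le> x" "x \<le> exp e" "f x = e^2"
      using IVT'[of f 1 "e^2" "exp e"] cont[of 1 "exp e"] 2 f1 by auto
    then show ?thesis
      using root[of x] 2 by (cases "x = 1") (auto simp: f_def intro!: exI[of _ x])
  next
    case 3
    define X where "X = exp (-(e^2+1))"
    have X: "X > 0" "X < 1"
      unfolding X_def by (auto simp: add_nonneg_pos) (smt (verit) zero_le_power2)
    have "f X \<ge> e^2"
      using X by (simp add: f_def X_def)
    then obtain x where "X \<le> x" "x \<le> 1" "f x = e^2"
      using IVT2'[of f 1 "e^2" X] cont[of X 1] X f1 by auto
    then show ?thesis
      using root[of x] 3 X by (cases "x = 1") (auto simp: f_def intro!: exI[of _ x])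
  qed
qed

lemma lam_pos: "lam e > 0" and eta_lam: "eta (lam e) = e"
proof -
  obtain x where "x > 0" "eta x = e"
    using eta_surj by blast
  then show "lam e > 0" "eta (lam e) = e"
    using lam_eta by auto
qed

lemma lam_eq_1_iff: "lam e = 1 \<longleftrightarrow> e = 0"
  using eta_lam eta_1 lam_eta by (metis zero_less_one)

text \<open>Differentiability comes from the defining formula; the value of the derivative is read
  off from \<open>eta\<^sup>2 = 2 (x - 1 - ln x)\<close>.\<close>
lemma eta_has_real_derivative:
  assumes x: "x > 0" "x \<noteq> 1"
  shows "(eta has_real_derivative (x - 1) / (x * eta x)) (at x)"
proof -
  define Q where "Q = (\<lambda>t::real. 2 * (t - 1 - ln t) / (t - 1)^2)"
  have pos: "Q x > 0"
    using ln_less_minus_one[OF x] x by (simp add: Q_def)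
  have "\<exists>Q'. (Q has_real_derivative Q') (at x)"
    unfolding Q_def using x by (intro exI) (rule derivative_intros | simp)+
  then obtain Q' where Q': "(Q has_real_derivative Q') (at x)"
    by blast
  have eta_eq: "eta = (\<lambda>t. (t - 1) * sqrt (Q t))"
    by (simp add: eta_def[abs_def] Q_def)
  obtain D where D: "(eta has_real_derivative D) (at x)"
    unfolding eta_eq
    using DERIV_mult[OF DERIV_diff[OF DERIV_ident DERIV_const]
        DERIV_chain2[OF DERIV_real_sqrt[OF pos] Q']]
    by blast
  have "((\<lambda>t. eta t ^ 2) has_real_derivative 2 * D * eta x) (at x)"
    using DERIV_power[OF D, of 2] by (simp add: mult.assoc)
  moreover have "((\<lambda>t. eta t ^ 2) has_real_derivative 2 * (1 - 1/x)) (at x)"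
  proof (rule has_field_derivative_transform_within_open[where S="{0<..}"])
    show "((\<lambda>t. 2 * (t - 1 - ln t)) has_real_derivative 2 * (1 - 1/x)) (at x)"
      using x by (auto intro!: derivative_eq_intros)
  qed (use x eta_squared in auto)
  ultimately have "2 * D * eta x = 2 * (1 - 1/x)"
    by (rule DERIV_unique)
  then have "D = (x - 1) / (x * eta x)"
    using x eta_nonzero[OF x] by (auto simp: field_simps)
  with D show ?thesis
    by simp
qed

lemma lam_has_real_derivative:
  assumes "e \<noteq> 0"
  shows "(lam has_real_derivative e * lam e / (lam e - 1)) (at e)"
proof -
  define l where "l = lam e"
  have l: "l > 0" "l \<noteq> 1" "eta l = e"
    using lam_pos lam_eq_1_iff eta_lam assms by (auto simp: l_def)
  obtain a b where ab: "0 < a" "a < l" "l < b" "1 \<notin> {a..b}"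
  proof (cases "l < 1")
    case True
    then show ?thesis
      using that[of "l/2" "(l+1)/2"] l by auto
  next
    case False
    then show ?thesis
      using that[of "(l+1)/2" "l+1"] l by auto
  qed
  have "isCont eta x" if "a \<le> x" "x \<le> b" for x
    using eta_has_real_derivative[of x] DERIV_isCont ab that by force
  then have "isCont lam e"
    using isCont_inverse_function2[of a l b lam eta] ab lam_eta l by force
  moreover have "(eta has_real_derivative (l - 1) / (l * eta l)) (at (lam e))"
    using eta_has_real_derivative[OF l(1,2)] by (simp add: l_def)
  moreover have "(l - 1) / (l * eta l) \<noteq> 0"
    using l assms by simp
  ultimately have "(lam has_real_derivative inverse ((l - 1) / (l * eta l))) (at e)"
    by (intro DERIV_inverse_function[where a="e - 1" and b="e + 1"]) (auto simp: eta_lam)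
  then show ?thesis
    using l assms by (simp add: l_def field_simps)
qed

lemma Re_pos_of_mem_ball_1:
  fixes z :: complex
  assumes "z \<in> ball 1 r" "r \<le> 1"
  shows "Re z > 0"
proof -
  have "Re (1 - z) < 1"
    using assms complex_Re_le_cmod[of "1 - z"] by (simp add: dist_complex_def)
  then show ?thesis
    by simp
qed

lemma not_nonpos_Reals_of_mem_ball_1:
  fixes z :: complex
  shows "z \<in> ball 1 r \<Longrightarrow> r \<le> 1 \<Longrightarrow> z \<notin> \<real>\<^sub>\<le>\<^sub>0"
  using Re_pos_of_mem_ball_1[of z r] by (auto simp: complex_nonpos_Reals_iff)

text \<open>The value \<open>1/2\<close> at the removable singularity is read off from the real limit.\<close>
lemma Ln_remainder_quotient_holomorphic:
  obtains h where "h holomorphic_on ball 1 1" "h 1 = 1/2"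
    "\<And>z. z \<noteq> 1 \<Longrightarrow> h z = (z - 1 - Ln z) / (z - 1)^2"
proof -
  define g where "g = (\<lambda>z::complex. z - 1 - Ln z)"
  have "ball (1::complex) 1 \<inter> \<real>\<^sub>\<le>\<^sub>0 = {}"
    using not_nonpos_Reals_of_mem_ball_1[of _ 1] by blast
  then have g: "g holomorphic_on ball 1 1"
    unfolding g_def by (intro holomorphic_intros)
  have "(g has_field_derivative 1 - inverse 1) (at 1)"
    unfolding g_def by (auto intro!: derivative_eq_intros has_field_derivative_Ln)
  then have dg: "deriv g 1 = 0"
    by (simp add: DERIV_imp_deriv)
  have "g 1 = 0"
    by (simp add: g_def)
  then obtain g1 where g1: "g1 holomorphic_on ball 1 1" "g1 1 = deriv g 1"
    "\<And>z. z \<noteq> 1 \<Longrightarrow> g1 z = g z / (z - 1)"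
    by (rule holomorphic_quotient_at_zero[OF g open_ball]) (rule that)
  obtain h where h: "h holomorphic_on ball 1 1" "h 1 = deriv g1 1"
    "\<And>z. z \<noteq> 1 \<Longrightarrow> h z = g1 z / (z - 1)"
    using g1(2) dg by (rule holomorphic_quotient_at_zero[OF g1(1) open_ball, OF trans]) (rule that)
  have h_eq: "h z = g z / (z - 1)^2" if "z \<noteq> 1" for z
    using that h(3) g1(3) by (simp add: power2_eq_square)
  have "isCont h 1"
    using holomorphic_on_imp_continuous_on[OF h(1)] continuous_on_eq_continuous_at[of "ball 1 1" h]
    by simp
  moreover have "((\<lambda>x::real. complex_of_real x) \<longlongrightarrow> 1) (at 1)"
    using tendsto_of_real[OF tendsto_ident_at[of "1::real" UNIV]] by simp
  ultimately have lim_h: "((\<lambda>x::real. h (of_real x)) \<longlongrightarrow> h 1) (at 1)"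
    by (rule isCont_tendsto_compose)
  moreover have lim_half: "((\<lambda>x::real. h (of_real x)) \<longlongrightarrow> of_real (1/2)) (at 1)"
  proof -
    have "((\<lambda>x::real. (x - 1 - ln x) / (x - 1)^2) \<longlongrightarrow> 1/2) (at 1)"
      by real_asymp
    then have lim: "((\<lambda>x::real. of_real ((x - 1 - ln x) / (x - 1)^2) :: complex) \<longlongrightarrow> of_real (1/2)) (at 1)"
      by (rule tendsto_of_real)
    have "\<forall>\<^sub>F x in at 1. x \<in> {0::real<..<2} - {1}"
      by (intro eventually_at_in_open) auto
    then have "\<forall>\<^sub>F x in at 1. of_real ((x - 1 - ln x) / (x - 1)^2) = h (of_real x)"
      by eventually_elim (auto simp: h_eq g_def Ln_of_real)
    with lim show ?thesis
      by (rule Lim_transform_eventually)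
  qed
  ultimately have "h 1 = of_real (1/2)"
    by (intro tendsto_unique[OF _ lim_h lim_half]) simp
  then show thesis
    by (intro that[OF h(1)]) (simp_all add: h_eq g_def)
qed

definition eta_sq_ratio :: "complex \<Rightarrow> complex" where
  "eta_sq_ratio z = (if z = 1 then 1 else 2 * (z - 1 - Ln z) / (z - 1)^2)"

definition eta_ratio :: "complex \<Rightarrow> complex" where
  "eta_ratio z = csqrt (eta_sq_ratio z)"

lemma eta_sq_ratio_holomorphic: "eta_sq_ratio holomorphic_on ball 1 1"
proof -
  obtain h where h: "h holomorphic_on ball 1 1" "h 1 = 1/2"
    "\<And>z. z \<noteq> 1 \<Longrightarrow> h z = (z - 1 - Ln z) / (z - 1)^2"
    using Ln_remainder_quotient_holomorphic by blast
  have "(\<lambda>z. 2 * h z) holomorphic_on ball 1 1"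
    using h(1) by (intro holomorphic_intros)
  moreover have "eta_sq_ratio z = 2 * h z" for z
    using h(3)[of z] by (cases "z = 1") (simp_all add: eta_sq_ratio_def h(2))
  then have "eta_sq_ratio = (\<lambda>z. 2 * h z)"
    by (rule ext)
  ultimately show ?thesis
    by simp
qed

lemma eta_c_eq: "eta_c z = (z - 1) * eta_ratio z"
  by (cases "z = 1") (auto simp: eta_c_def eta_ratio_def eta_sq_ratio_def)

lemma eta_c_squared: "eta_c z ^ 2 = 2 * (z - 1 - Ln z)"
  by (cases "z = 1") (auto simp: eta_c_def power_mult_distrib)

lemma eta_c_of_real: "x > 0 \<Longrightarrow> eta_c (of_real x) = of_real (eta x)"
proof -
  assume x: "x > 0"
  have eq: "2 * (of_real x - 1 - Ln (of_real x)) / (of_real x - 1)^2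
      = (of_real (2 * (x - 1 - ln x) / (x - 1)^2) :: complex)"
    using x by (simp add: Ln_of_real)
  have "2 * (x - 1 - ln x) / (x - 1)^2 \<ge> 0"
    using ln_less_minus_one[OF x] by (cases "x = 1") auto
  then have csq: "csqrt (of_real (2 * (x - 1 - ln x) / (x - 1)^2))
      = of_real (sqrt (2 * (x - 1 - ln x) / (x - 1)^2))"
    by simp
  show ?thesis
    unfolding eta_c_def eta_def eq csq by simp
qed

lemma phi_c_of_real: "x > 0 \<Longrightarrow> phi_c j (of_real x) = of_real (phi j x)"
  by (simp add: phi_c_def phi_def eta_c_of_real)

lemma eta_sq_ratio_of_real:
  assumes "x > 0" "x \<noteq> 1"
  shows "eta_sq_ratio (of_real x) = of_real (2 * (x - 1 - ln x) / (x - 1)^2)"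
    and "2 * (x - 1 - ln x) / (x - 1)^2 > 0"
  using assms ln_less_minus_one[OF assms] by (auto simp: eta_sq_ratio_def Ln_of_real)

definition eta_radius :: real where
  "eta_radius = (SOME r. 0 < r \<and> r \<le> 1 \<and> (\<forall>z\<in>ball 1 r. Re (eta_sq_ratio z) > 0))"

lemma eta_radius:
  "0 < eta_radius" "eta_radius \<le> 1" "z \<in> ball 1 eta_radius \<Longrightarrow> Re (eta_sq_ratio z) > 0"
proof -
  have "isCont eta_sq_ratio 1"
    using holomorphic_on_imp_continuous_on[OF eta_sq_ratio_holomorphic]
      continuous_on_eq_continuous_at[of "ball 1 1" eta_sq_ratio]
    by simp
  then obtain d where d: "d > 0" "\<And>z. dist z 1 < d \<Longrightarrow> dist (eta_sq_ratio z) (eta_sq_ratio 1) < 1"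
    unfolding continuous_at_eps_delta using zero_less_one by blast
  have "Re (eta_sq_ratio z) > 0" if "dist z 1 < d" for z
    using d(2)[OF that] complex_Re_le_cmod[of "1 - eta_sq_ratio z"]
    by (simp add: dist_norm norm_minus_commute eta_sq_ratio_def)
  then have "\<exists>r. 0 < r \<and> r \<le> 1 \<and> (\<forall>z\<in>ball 1 r. Re (eta_sq_ratio z) > 0)"
    using d(1) by (intro exI[of _ "min d 1"]) (auto simp: dist_commute)
  from someI_ex[OF this] show "0 < eta_radius" "eta_radius \<le> 1"
    "z \<in> ball 1 eta_radius \<Longrightarrow> Re (eta_sq_ratio z) > 0"
    unfolding eta_radius_def[symmetric] by auto
qed

lemma eta_sq_ratio_not_nonpos_Reals: "z \<in> ball 1 eta_radius \<Longrightarrow> eta_sq_ratio z \<notin> \<real>\<^sub>\<le>\<^sub>0"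
  using eta_radius(3)[of z] by (auto simp: complex_nonpos_Reals_iff)

lemma not_nonpos_Reals_of_mem_eta_ball:
  assumes "z \<in> ball 1 eta_radius"
  shows "z \<notin> \<real>\<^sub>\<le>\<^sub>0" "eta_sq_ratio z \<notin> \<real>\<^sub>\<le>\<^sub>0"
  using assms not_nonpos_Reals_of_mem_ball_1 eta_radius(2) eta_sq_ratio_not_nonpos_Reals by auto

lemma not_nonpos_Reals_of_real_pos:
  assumes "x > 0" "x \<noteq> 1"
  shows "complex_of_real x \<notin> \<real>\<^sub>\<le>\<^sub>0" "eta_sq_ratio (of_real x) \<notin> \<real>\<^sub>\<le>\<^sub>0"
  using assms eta_sq_ratio_of_real[OF assms] by (auto simp: complex_nonpos_Reals_iff)

lemma eta_ratio_holomorphic: "eta_ratio holomorphic_on ball 1 eta_radius"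
proof -
  have "eta_sq_ratio holomorphic_on ball 1 eta_radius"
    by (intro holomorphic_on_subset[OF eta_sq_ratio_holomorphic] subset_ball eta_radius(2))
  then show ?thesis
    unfolding eta_ratio_def[abs_def] using eta_sq_ratio_not_nonpos_Reals
    by (intro holomorphic_intros) auto
qed

lemma eta_ratio_nonzero: "z \<in> ball 1 eta_radius \<Longrightarrow> eta_ratio z \<noteq> 0"
  using eta_sq_ratio_not_nonpos_Reals[of z] by (auto simp: eta_ratio_def)

lemma eta_ratio_1 [simp]: "eta_ratio 1 = 1"
  by (simp add: eta_ratio_def eta_sq_ratio_def)

lemma eta_c_has_field_derivative:
  assumes z: "z \<notin> \<real>\<^sub>\<le>\<^sub>0" "z \<noteq> 1" "eta_sq_ratio z \<notin> \<real>\<^sub>\<le>\<^sub>0"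
  shows "(eta_c has_field_derivative (z - 1) / (z * eta_c z)) (at z)"
proof -
  define q where "q = (\<lambda>w::complex. 2 * (w - 1 - Ln w) / (w - 1)^2)"
  have "q holomorphic_on - (\<real>\<^sub>\<le>\<^sub>0 \<union> {1})"
    unfolding q_def by (intro holomorphic_intros) auto
  then have dq: "(q has_field_derivative deriv q z) (at z)"
    using z by (intro holomorphic_derivI[of _ "- (\<real>\<^sub>\<le>\<^sub>0 \<union> {1})"]) auto
  have qz: "q z \<notin> \<real>\<^sub>\<le>\<^sub>0"
    using z by (simp add: q_def eta_sq_ratio_def)
  have eta_c_eq_q: "eta_c = (\<lambda>w. (w - 1) * csqrt (q w))"
    by (simp add: eta_c_def[abs_def] q_def)
  obtain D where D: "(eta_c has_field_derivative D) (at z)"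
    unfolding eta_c_eq_q
    using DERIV_mult[OF DERIV_diff[OF DERIV_ident DERIV_const[of 1]]
        has_field_derivative_csqrt'[OF dq qz]]
    by blast
  have "((\<lambda>w. eta_c w ^ 2) has_field_derivative 2 * D * eta_c z) (at z)"
    using DERIV_power[OF D, of 2] by (simp add: mult.assoc)
  moreover have "((\<lambda>w. eta_c w ^ 2) has_field_derivative 2 * (1 - inverse z)) (at z)"
    unfolding eta_c_squared using z(1) by (auto intro!: derivative_eq_intros has_field_derivative_Ln)
  ultimately have "2 * D * eta_c z = 2 * (1 - inverse z)"
    by (rule DERIV_unique)
  moreover have "eta_c z \<noteq> 0" "z \<noteq> 0"
    using z by (auto simp: eta_c_eq eta_ratio_def)
  ultimately have "D * eta_c z = 1 - inverse z"
    by (metis mult.assoc mult_cancel_left zero_neq_numeral)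
  then have "D = (z - 1) / (z * eta_c z)"
    using \<open>eta_c z \<noteq> 0\<close> \<open>z \<noteq> 0\<close> by (simp add: field_simps)
  with D show ?thesis
    by simp
qed

definition phi_coeff :: "nat \<Rightarrow> complex" where
  "phi_coeff j = of_real ((-1)^(j+1) * odd_dfact j)"

definition phi_numer :: "nat \<Rightarrow> complex \<Rightarrow> complex" where
  "phi_numer j z = inverse (eta_ratio z) ^ (2*j+1)"

lemma phi_coeff_Suc: "phi_coeff (Suc j) = - of_nat (2*j+1) * phi_coeff j"
  by (simp add: phi_coeff_def odd_dfact_def prod.lessThan_Suc algebra_simps)

lemma phi_numer_holomorphic: "phi_numer j holomorphic_on ball 1 eta_radius"
  unfolding phi_numer_def[abs_def] using eta_ratio_holomorphic eta_ratio_nonzero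
  by (intro holomorphic_intros) auto

lemma phi_c_eq: "phi_c j z = phi_coeff j * phi_numer j z / (z - 1)^(2*j+1)"
  by (simp add: phi_c_def phi_coeff_def phi_numer_def eta_c_eq power_mult_distrib
      divide_inverse power_inverse mult_ac)

text \<open>Since \<open>eta_c' = (z - 1) / (z eta_c)\<close>, differentiating \<open>eta_c\<^bsup>-(2j+1)\<^esup>\<close> multiplies
  the coefficient by \<open>-(2j+1)\<close> and the exponent moves on to \<open>-(2j+3)\<close>.\<close>
lemma phi_c_has_field_derivative:
  assumes z: "z \<notin> \<real>\<^sub>\<le>\<^sub>0" "z \<noteq> 1" "eta_sq_ratio z \<notin> \<real>\<^sub>\<le>\<^sub>0"
  shows "(phi_c j has_field_derivative (z - 1) / z * phi_c (Suc j) z) (at z)"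
proof -
  let ?E = "eta_c z" and ?D = "(z - 1) / (z * eta_c z)"
  define P where "P = ?E ^ (2*j)"
  have E: "?E \<noteq> 0" "z \<noteq> 0" "P \<noteq> 0"
    using z by (auto simp: P_def eta_c_eq eta_ratio_def)
  have "phi_c j = (\<lambda>w. phi_coeff j / eta_c w ^ (2*j+1))"
    by (simp add: phi_c_def[abs_def] phi_coeff_def)
  then have "(phi_c j has_field_derivative
      (0 * ?E ^ (2*j+1) - phi_coeff j * (of_nat (2*j+1) * (?D * ?E ^ (2*j+1 - Suc 0))))
        / (?E ^ (2*j+1) * ?E ^ (2*j+1))) (at z)"
    using E by (simp only:)
      (rule DERIV_divide[OF DERIV_const DERIV_power[OF eta_c_has_field_derivative[OF z]]], simp)
  moreover have "(0 * ?E ^ (2*j+1) - phi_coeff j * (of_nat (2*j+1) * (?D * ?E ^ (2*j+1 - Suc 0))))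
        / (?E ^ (2*j+1) * ?E ^ (2*j+1)) = (z - 1) / z * phi_c (Suc j) z"
  proof -
    have "2 * Suc j + 1 = 2*j+3"
      by simp
    then have phi_Suc: "phi_c (Suc j) z = phi_coeff (Suc j) / ?E ^ (2*j+3)"
      unfolding phi_c_def phi_coeff_def by (simp only:)
    have pow: "?E ^ (2*j+1) = ?E * P" "?E ^ (2*j+1 - Suc 0) = P" "?E ^ (2*j+3) = ?E ^ 3 * P"
      by (simp_all add: P_def power_add)
    show ?thesis
      unfolding phi_Suc phi_coeff_Suc pow using E by (simp add: field_simps power3_eq_cube)
  qed
  ultimately show ?thesis
    by simp
qed

section \<open>Stirling coefficients as Taylor coefficients\<close>

lemma powr_half_odd: "a > 0 \<Longrightarrow> a powr (real j + 1/2) = sqrt a ^ (2*j+1)"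
proof -
  assume a: "a > 0"
  have "a powr (real j + 1/2) = (a powr (1/2)) powr real (2*j+1)"
    by (simp add: powr_powr field_simps)
  also have "\<dots> = sqrt a powr real (2*j+1)"
    using a by (simp only: powr_half_sqrt[OF less_imp_le[OF a]])
  also have "\<dots> = sqrt a ^ (2*j+1)"
    using a by (intro powr_realpow) simp
  finally show ?thesis .
qed

lemma phi_numer_of_real:
  assumes "x > -1"
  shows "phi_numer j (1 + of_real x) = of_real (stirling_base x powr (real j + 1/2))"
proof (cases "x = 0")
  case True
  then show ?thesis
    by (simp add: phi_numer_def stirling_base_def)
next
  case False
  define Q where "Q = 2 * (x - ln (1 + x)) / x^2"
  have "eta_sq_ratio (of_real (1 + x)) = of_real Q" "Q > 0"
    using eta_sq_ratio_of_real[of "1 + x"] assms False by (simp_all add: Q_def)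
  then have "phi_numer j (1 + of_real x) = of_real (inverse (sqrt Q) ^ (2*j+1))"
    by (simp add: phi_numer_def eta_ratio_def)
  moreover have "stirling_base x = inverse Q"
    using False by (simp add: stirling_base_def Q_def field_simps)
  ultimately show ?thesis
    using \<open>Q > 0\<close> by (simp add: powr_half_odd real_sqrt_inverse)
qed

lemma odd_dfact_pos: "odd_dfact n > 0"
  unfolding odd_dfact_def by (intro prod_pos) auto

lemma fact_double: "fact (2*n) = odd_dfact n * 2^n * (fact n :: real)"
proof (induction n)
  case (Suc n)
  have "fact (2 * Suc n) = (of_nat (2*n+2) * of_nat (2*n+1)) * (fact (2*n) :: real)"
    by (simp add: algebra_simps)
  then show ?case
    unfolding Suc by (simp add: odd_dfact_def prod.lessThan_Suc algebra_simps)
qed (simp add: odd_dfact_def)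

lemma stirling_gamma_eq_higher_deriv:
  "complex_of_real (stirling_gamma n) = (-1)^n / (2^n * fact n) * (deriv ^^ (2*n)) (phi_numer n) 1"
proof -
  define G where "G = phi_numer n \<circ> (\<lambda>w. 1 + w)"
  have "G holomorphic_on ball 0 eta_radius"
    unfolding G_def using phi_numer_holomorphic
    by (intro holomorphic_on_compose holomorphic_intros) (auto simp: dist_norm holomorphic_on_subset)
  moreover have "G (of_real t) = of_real (stirling_base t powr (real n + 1/2))"
    if "\<bar>t\<bar> < eta_radius" for t
    using that eta_radius(2) by (simp add: G_def phi_numer_of_real)
  ultimately have "(deriv ^^ (2*n)) G 0
      = of_real ((deriv ^^ (2*n)) (\<lambda>t. stirling_base t powr (real n + 1/2)) 0)"
    using higher_deriv_real_restriction[where x=0] eta_radius(1) by force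
  moreover have "(deriv ^^ (2*n)) (phi_numer n) 1 = (deriv ^^ (2*n)) G 0"
    unfolding G_def by (rule higher_deriv_shift_0)
  ultimately show ?thesis
    by (simp add: stirling_gamma_def)
qed

lemma phi_coeff_higher_deriv_phi_numer:
  "phi_coeff n * (deriv ^^ (2*n)) (phi_numer n) 1 / fact (2*n) = - complex_of_real (stirling_gamma n)"
proof -
  define d where "d = (2^n * fact n :: real)"
  have d: "d \<noteq> 0"
    by (simp add: d_def)
  have sign: "(-1::real)^(n+1) * (-1)^n = -1"
    by (induction n) auto
  have signed: "(-1)^n * (deriv ^^ (2*n)) (phi_numer n) 1 = of_real (d * stirling_gamma n)"
    using stirling_gamma_eq_higher_deriv[of n] d by (simp add: d_def field_simps)
  have "(-1::complex)^n * (-1)^n = 1"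
    by (induction n) auto
  then have "(deriv ^^ (2*n)) (phi_numer n) 1 = (-1)^n * ((-1)^n * (deriv ^^ (2*n)) (phi_numer n) 1)"
    by (simp only: mult.assoc[symmetric] mult_1)
  also have "\<dots> = (-1)^n * of_real (d * stirling_gamma n)"
    by (simp only: signed)
  also have "\<dots> = of_real ((-1)^n * d * stirling_gamma n)"
    by (simp only: of_real_mult of_real_power of_real_minus of_real_1 mult.assoc)
  finally have deriv_eq: "(deriv ^^ (2*n)) (phi_numer n) 1 = of_real ((-1)^n * d * stirling_gamma n)" .
  have fact_eq: "(fact (2*n) :: complex) = of_real (odd_dfact n * d)"
    by (metis of_real_fact fact_double d_def mult.assoc)
  have "phi_coeff n * (deriv ^^ (2*n)) (phi_numer n) 1 / fact (2*n)
      = of_real ((-1)^(n+1) * odd_dfact n * ((-1)^n * d * stirling_gamma n) / (odd_dfact n * d))"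
    unfolding phi_coeff_def deriv_eq fact_eq by (simp only: of_real_mult of_real_divide)
  also have "(-1)^(n+1) * odd_dfact n * ((-1)^n * d * stirling_gamma n) / (odd_dfact n * d)
      = - stirling_gamma n"
    using odd_dfact_pos[of n] d sign by (simp add: field_simps)
  finally show ?thesis
    by simp
qed

section \<open>The singular parts of \<open>phi_j\<close>\<close>

abbreviation phi_sing :: "nat \<Rightarrow> complex \<Rightarrow> complex" where
  "phi_sing j \<equiv> singular_part (phi_c j) 1"

lemma phi_c_contour_integral:
  assumes "0 < \<rho>" "\<rho> < eta_radius"
  shows "(phi_c n has_contour_integral 2 * pi * \<i> * - of_real (stirling_gamma n)) (circlepath 1 \<rho>)"
proof -
  have sub: "cball 1 \<rho> \<subseteq> ball 1 eta_radius" "ball 1 \<rho> \<subseteq> ball 1 eta_radius"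
    using assms by (auto simp: subset_iff)
  have "((\<lambda>z. phi_numer n z / (z - 1) ^ Suc (2*n)) has_contour_integral
      (2 * pi * \<i>) / fact (2*n) * (deriv ^^ (2*n)) (phi_numer n) 1) (circlepath 1 \<rho>)"
    using assms holomorphic_on_subset[OF phi_numer_holomorphic sub(1)]
      holomorphic_on_subset[OF phi_numer_holomorphic sub(2)]
    by (intro Cauchy_has_contour_integral_higher_derivative_circlepath holomorphic_on_imp_continuous_on)
       auto
  then have "((\<lambda>z. phi_coeff n * (phi_numer n z / (z - 1) ^ Suc (2*n))) has_contour_integral
      phi_coeff n * ((2 * pi * \<i>) / fact (2*n) * (deriv ^^ (2*n)) (phi_numer n) 1)) (circlepath 1 \<rho>)"
    by (rule has_contour_integral_lmul)
  moreover have "phi_coeff n * ((2 * pi * \<i>) / fact (2*n) * (deriv ^^ (2*n)) (phi_numer n) 1)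
      = 2 * pi * \<i> * (phi_coeff n * (deriv ^^ (2*n)) (phi_numer n) 1 / fact (2*n))"
    by (simp add: field_simps)
  ultimately have "((\<lambda>z. phi_coeff n * (phi_numer n z / (z - 1) ^ Suc (2*n))) has_contour_integral
      2 * pi * \<i> * (phi_coeff n * (deriv ^^ (2*n)) (phi_numer n) 1 / fact (2*n))) (circlepath 1 \<rho>)"
    by metis
  then show ?thesis
    unfolding phi_coeff_higher_deriv_phi_numer
    by (rule has_contour_integral_eq) (simp add: phi_c_eq)
qed

lemma phi_c_Suc_eq_deriv:
  assumes R: "R holomorphic_on ball 1 eta_radius"
    and dec: "\<And>z. z \<in> ball 1 eta_radius \<Longrightarrow> z \<noteq> 1 \<Longrightarrow> phi_c j z = phi_sing j z + R z"
    and z: "z \<in> ball 1 eta_radius" "z \<noteq> 1"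
  shows "phi_c (Suc j) z = z / (z - 1) * (deriv (phi_sing j) z + deriv R z)"
proof -
  have d1: "(phi_c j has_field_derivative (z - 1) / z * phi_c (Suc j) z) (at z)"
    using phi_c_has_field_derivative not_nonpos_Reals_of_mem_eta_ball[OF z(1)] z(2) by blast
  have "((\<lambda>w. phi_sing j w + R w) has_field_derivative deriv (phi_sing j) z + deriv R z) (at z)"
    using laurent_poly_upto_deriv(2)[OF laurent_poly_upto_singular_part z(2)]
      holomorphic_derivI[OF R open_ball z(1)]
    by (rule DERIV_add)
  then have d2: "(phi_c j has_field_derivative deriv (phi_sing j) z + deriv R z) (at z)"
    by (rule has_field_derivative_transform_within_open[where S="ball 1 eta_radius - {1}"])
       (use z dec in auto)
  have "(z - 1) / z * phi_c (Suc j) z = deriv (phi_sing j) z + deriv R z"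
    using d1 d2 by (rule DERIV_unique)
  moreover have "z \<noteq> 0"
    using Re_pos_of_mem_ball_1[OF z(1) eta_radius(2)] by auto
  ultimately show ?thesis
    using z(2) by (auto simp: field_simps)
qed

text \<open>Integrate \<open>phi_c (Suc j) = (S' + S' / (z - 1)) + z R' / (z - 1)\<close> around 1: the first
  summand has only exponents \<open>\<le> -2\<close>, so the integral is \<open>2 \<pi> \<i> R'(1)\<close>, while
  \<open>phi_c_contour_integral\<close> computes it as \<open>-2 \<pi> \<i> gamma (Suc j)\<close>.\<close>
lemma remainder_deriv_at_1:
  assumes R: "R holomorphic_on ball 1 eta_radius"
    and dec: "\<And>z. z \<in> ball 1 eta_radius \<Longrightarrow> z \<noteq> 1 \<Longrightarrow> phi_c j z = phi_sing j z + R z"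
  shows "deriv R 1 = - of_real (stirling_gamma (Suc j))"
proof -
  define \<rho> where "\<rho> = eta_radius / 2"
  have \<rho>: "0 < \<rho>" "\<rho> < eta_radius"
    using eta_radius(1) by (auto simp: \<rho>_def)
  define S' where "S' = deriv (phi_sing j)"
  have S': "laurent_poly_upto 1 (-2) S'"
    using laurent_poly_upto_deriv(1)[OF laurent_poly_upto_singular_part] by (simp add: S'_def)
  moreover have "laurent_poly_upto 1 (-2) (\<lambda>z. S' z / (z - 1))"
    by (rule laurent_poly_upto_mono[OF laurent_poly_upto_divide[OF S']]) simp
  ultimately have "laurent_poly_upto 1 (-2) (\<lambda>z. S' z + S' z / (z - 1))"
    by (rule laurent_poly_upto_add)
  then have I0: "((\<lambda>z. S' z + S' z / (z - 1)) has_contour_integral 0) (circlepath 1 \<rho>)"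
    using \<rho>(1) by (rule laurent_poly_upto_contour_integral)
  have "(\<lambda>z. z * deriv R z) holomorphic_on ball 1 eta_radius"
    using R by (intro holomorphic_intros holomorphic_deriv) auto
  then have hol: "(\<lambda>z. z * deriv R z) holomorphic_on cball 1 \<rho>"
    by (rule holomorphic_on_subset) (use \<rho> in \<open>auto simp: subset_iff\<close>)
  have IR: "((\<lambda>z. z * deriv R z / (z - 1)) has_contour_integral 2 * pi * \<i> * deriv R 1) (circlepath 1 \<rho>)"
    using Cauchy_integral_circlepath_simple[OF hol, of 1] \<rho> by simp
  have "(phi_c (Suc j) has_contour_integral 0 + 2 * pi * \<i> * deriv R 1) (circlepath 1 \<rho>)"
  proof (rule has_contour_integral_eq[OF has_contour_integral_add[OF I0 IR]])
    fix z
    assume "z \<in> path_image (circlepath 1 \<rho>)"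
    then have z: "z \<in> ball 1 eta_radius" "z \<noteq> 1"
      using \<rho> by (auto simp: path_image_circlepath dist_norm norm_minus_commute)
    then show "S' z + S' z / (z - 1) + z * deriv R z / (z - 1) = phi_c (Suc j) z"
    proof -
      have "S' z + S' z / (z - 1) + z * deriv R z / (z - 1) = z / (z - 1) * (S' z + deriv R z)"
        using z(2) by (simp add: divide_simps) (simp add: algebra_simps)
      also have "\<dots> = phi_c (Suc j) z"
        unfolding S'_def by (rule phi_c_Suc_eq_deriv[OF R dec z, symmetric])
      finally show ?thesis .
    qed
  qed
  from has_contour_integral_unique[OF this phi_c_contour_integral[OF \<rho>]]
  have "2 * pi * \<i> * deriv R 1 = 2 * pi * \<i> * - of_real (stirling_gamma (Suc j))"
    by (simp only: add_0_left)
  moreover have "2 * pi * \<i> \<noteq> 0"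
    by simp
  ultimately show ?thesis
    by (metis mult_left_cancel)
qed

lemma phi_c_0_decomposition:
  obtains R where "R holomorphic_on ball 1 eta_radius"
    "\<And>z. z \<in> ball 1 eta_radius \<Longrightarrow> z \<noteq> 1 \<Longrightarrow> phi_c 0 z = - 1 / (z - 1) + R z"
proof -
  have "(\<lambda>z. 1 - phi_numer 0 z) holomorphic_on ball 1 eta_radius"
    using phi_numer_holomorphic by (intro holomorphic_intros)
  moreover have "1 - phi_numer 0 1 = 0"
    by (simp add: phi_numer_def)
  ultimately obtain R where R: "R holomorphic_on ball 1 eta_radius"
    "\<And>z. z \<noteq> 1 \<Longrightarrow> R z = (1 - phi_numer 0 z) / (z - 1)"
    by (rule holomorphic_quotient_at_zero[OF _ open_ball]) (rule that)
  have "phi_c 0 z = - 1 / (z - 1) + R z" if "z \<noteq> 1" for z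
    using that by (simp add: phi_c_eq R(2) phi_coeff_def odd_dfact_def divide_simps)
  with R(1) show thesis
    using that by blast
qed

lemma phi_sing_0: "w \<noteq> 1 \<Longrightarrow> phi_sing 0 w = - 1 / (w - 1)"
proof -
  assume "w \<noteq> 1"
  obtain R where R: "R holomorphic_on ball 1 eta_radius"
    "\<And>z. z \<in> ball 1 eta_radius \<Longrightarrow> z \<noteq> 1 \<Longrightarrow> phi_c 0 z = - 1 / (z - 1) + R z"
    using phi_c_0_decomposition by blast
  have dec: "phi_c 0 z = - 1 * (z - 1) powi (-1) + R z" if "z \<in> ball 1 eta_radius" "z \<noteq> 1" for z
    using R(2)[OF that] by (simp add: power_int_minus_divide)
  have "phi_sing 0 w = - 1 * (w - 1) powi (-1)"
    by (rule singular_part_eqI[OF laurent_poly_upto_monomial R(1) eta_radius(1) dec \<open>w \<noteq> 1\<close>]) simp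
  then show ?thesis
    by (simp add: power_int_minus_divide)
qed

text \<open>The inductive step: from \<open>phi_c j = phi_sing j + R\<close> with \<open>R\<close> holomorphic at 1,
  \<open>phi_c (Suc j) = z / (z - 1) (phi_sing j' + R')\<close>, and \<open>R'(1) = -gamma (Suc j)\<close> makes
  \<open>(z R'(z) + gamma (Suc j)) / (z - 1)\<close> holomorphic.\<close>
lemma phi_c_Suc_decomposition:
  assumes R: "R holomorphic_on ball 1 eta_radius"
    and dec: "\<And>z. z \<in> ball 1 eta_radius \<Longrightarrow> z \<noteq> 1 \<Longrightarrow> phi_c j z = phi_sing j z + R z"
  shows "\<exists>R'. R' holomorphic_on ball 1 eta_radius \<and>
      (\<forall>z\<in>ball 1 eta_radius - {1}. phi_c (Suc j) z = phi_sing (Suc j) z + R' z)"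
    and "w \<noteq> 1 \<Longrightarrow> phi_sing (Suc j) w
      = w / (w - 1) * deriv (phi_sing j) w - of_real (stirling_gamma (Suc j)) / (w - 1)"
proof -
  define g where "g = complex_of_real (stirling_gamma (Suc j))"
  define S' where "S' = deriv (phi_sing j)"
  define T where "T w = w / (w - 1) * S' w - g / (w - 1)" for w
  have S': "laurent_poly_upto 1 (-2) S'"
    using laurent_poly_upto_deriv(1)[OF laurent_poly_upto_singular_part] by (simp add: S'_def)
  have "laurent_poly_upto 1 (-1) S'"
    by (rule laurent_poly_upto_mono[OF S']) simp
  moreover have "laurent_poly_upto 1 (-1) (\<lambda>w. S' w / (w - 1))"
    by (rule laurent_poly_upto_mono[OF laurent_poly_upto_divide[OF S']]) simp
  ultimately have "laurent_poly_upto 1 (-1) (\<lambda>w. S' w + S' w / (w - 1))"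
    by (rule laurent_poly_upto_add)
  then have "laurent_poly_upto 1 (-1) (\<lambda>w. (S' w + S' w / (w - 1)) + (-g) * (w - 1) powi (-1))"
    by (rule laurent_poly_upto_add[OF _ laurent_poly_upto_monomial]) simp
  then have T: "laurent_poly_upto 1 (-1) T"
    by (rule laurent_poly_upto_cong)
       (simp add: T_def power_int_minus divide_simps, simp add: algebra_simps)
  have "(\<lambda>z. z * deriv R z + g) holomorphic_on ball 1 eta_radius"
    using R by (intro holomorphic_intros holomorphic_deriv) auto
  moreover have "1 * deriv R 1 + g = 0"
    using remainder_deriv_at_1[OF R dec] by (simp add: g_def)
  ultimately obtain R' where R': "R' holomorphic_on ball 1 eta_radius"
    "\<And>z. z \<noteq> 1 \<Longrightarrow> R' z = (z * deriv R z + g) / (z - 1)"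
    by (rule holomorphic_quotient_at_zero[OF _ open_ball]) (rule that)
  have dec': "phi_c (Suc j) z = T z + R' z" if "z \<in> ball 1 eta_radius" "z \<noteq> 1" for z
    using phi_c_Suc_eq_deriv[OF R dec that] \<open>z \<noteq> 1\<close>
    by (simp add: T_def R'(2) S'_def divide_simps) (simp add: algebra_simps)
  have sing: "phi_sing (Suc j) w = T w" if "w \<noteq> 1" for w
    using singular_part_eqI[OF T R'(1) eta_radius(1) dec' that] .
  show "\<exists>R'. R' holomorphic_on ball 1 eta_radius \<and>
      (\<forall>z\<in>ball 1 eta_radius - {1}. phi_c (Suc j) z = phi_sing (Suc j) z + R' z)"
    using R'(1) dec' sing by (intro exI[of _ R']) auto
  show "w \<noteq> 1 \<Longrightarrow> phi_sing (Suc j) w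
      = w / (w - 1) * deriv (phi_sing j) w - of_real (stirling_gamma (Suc j)) / (w - 1)"
    using sing by (simp add: T_def S'_def g_def)
qed

lemma phi_c_decomposition:
  "\<exists>R. R holomorphic_on ball 1 eta_radius \<and>
     (\<forall>z\<in>ball 1 eta_radius - {1}. phi_c j z = phi_sing j z + R z)"
proof (induction j)
  case 0
  obtain R where R: "R holomorphic_on ball 1 eta_radius"
    "\<And>z. z \<in> ball 1 eta_radius \<Longrightarrow> z \<noteq> 1 \<Longrightarrow> phi_c 0 z = - 1 / (z - 1) + R z"
    using phi_c_0_decomposition by blast
  then show ?case
    using phi_sing_0 by auto
next
  case (Suc j)
  then obtain R where "R holomorphic_on ball 1 eta_radius"
    "\<And>z. z \<in> ball 1 eta_radius \<Longrightarrow> z \<noteq> 1 \<Longrightarrow> phi_c j z = phi_sing j z + R z"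
    by blast
  then show ?case
    by (rule phi_c_Suc_decomposition(1))
qed

lemma phi_sing_Suc:
  assumes "w \<noteq> 1"
  shows "phi_sing (Suc j) w
     = w / (w - 1) * deriv (phi_sing j) w - of_real (stirling_gamma (Suc j)) / (w - 1)"
proof -
  obtain R where "R holomorphic_on ball 1 eta_radius"
    "\<And>z. z \<in> ball 1 eta_radius \<Longrightarrow> z \<noteq> 1 \<Longrightarrow> phi_c j z = phi_sing j z + R z"
    using phi_c_decomposition[of j] by blast
  then show ?thesis
    using assms by (rule phi_c_Suc_decomposition(2))
qed

section \<open>The functions \<open>c_j\<close>\<close>

lemma phi_c_minus_sing_has_field_derivative:
  assumes w: "w \<notin> \<real>\<^sub>\<le>\<^sub>0" "w \<noteq> 1" "eta_sq_ratio w \<notin> \<real>\<^sub>\<le>\<^sub>0"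
  shows "((\<lambda>z. phi_c j z - phi_sing j z) has_field_derivative
      ((w - 1) * (phi_c (Suc j) w - phi_sing (Suc j) w) - of_real (stirling_gamma (Suc j))) / w) (at w)"
proof -
  have "((\<lambda>z. phi_c j z - phi_sing j z) has_field_derivative
      (w - 1) / w * phi_c (Suc j) w - deriv (phi_sing j) w) (at w)"
    using phi_c_has_field_derivative[OF w]
      laurent_poly_upto_deriv(2)[OF laurent_poly_upto_singular_part w(2)]
    by (rule DERIV_diff)
  moreover have "w \<noteq> 0"
    using w(1) by auto
  ultimately show ?thesis
    using w(2) by (simp add: phi_sing_Suc divide_simps) (simp add: algebra_simps)
qed

lemma c_fun_eq_phi_minus_sing:
  "e \<noteq> 0 \<Longrightarrow> of_real (c_fun j e) = phi_c j (of_real (lam e)) - phi_sing j (of_real (lam e))"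
proof (induction j arbitrary: e)
  case 0
  then have "lam e > 0" "lam e \<noteq> 1" "eta (lam e) = e"
    using lam_pos lam_eq_1_iff eta_lam by auto
  then show ?case
    by (simp add: phi_c_of_real phi_def odd_dfact_def phi_sing_0)
next
  case (Suc j e)
  define l where "l = lam e"
  define G where "G z = phi_c j z - phi_sing j z" for z
  define g where "g = stirling_gamma (Suc j)"
  have l: "l > 0" "l \<noteq> 1" "eta l = e"
    using lam_pos lam_eq_1_iff eta_lam Suc.prems by (auto simp: l_def)
  define G' where "G' = ((of_real l - 1) * (phi_c (Suc j) (of_real l) - phi_sing (Suc j) (of_real l))
      - of_real g) / of_real l"
  have dG: "(G has_field_derivative G') (at (of_real l))"
    unfolding G_def G'_def g_def
    using phi_c_minus_sing_has_field_derivative not_nonpos_Reals_of_real_pos[OF l(1,2)] l(2) by simp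
  have "\<forall>\<^sub>F t in nhds l. t \<in> {0<..} - {1}"
    using l by (intro eventually_nhds_in_open) auto
  then have "\<forall>\<^sub>F t in nhds l. G (of_real t) = of_real (c_fun j (eta t))"
    by eventually_elim (simp add: G_def Suc.IH eta_nonzero lam_eta)
  from has_field_derivative_real_restriction[OF dG this]
  have d_eta: "((\<lambda>t. c_fun j (eta t)) has_real_derivative Re G') (at l)"
    and G'_real: "G' = of_real (Re G')"
    by blast+
  have "((\<lambda>y. c_fun j (eta (lam y))) has_real_derivative Re G' * (e * l / (l - 1))) (at e)"
    using DERIV_chain2[OF d_eta[unfolded l_def] lam_has_real_derivative[OF Suc.prems]]
    by (simp add: l_def)
  then have "deriv (c_fun j) e = Re G' * (e * l / (l - 1))"
    by (simp add: eta_lam DERIV_imp_deriv)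
  then have "c_fun (Suc j) e = (l * Re G' + g) / (l - 1)"
    using Suc.prems l(2) by (simp add: l_def g_def field_simps)
  also have "complex_of_real \<dots> = (of_real l * G' + of_real g) / (of_real l - 1)"
    by (subst G'_real) simp
  also have "\<dots> = phi_c (Suc j) (of_real l) - phi_sing (Suc j) (of_real l)"
    using l(1,2) unfolding G'_def by (simp add: field_simps)
  finally show ?case
    by (simp add: l_def)
qed

theorem lemmaA3:
  fixes j :: nat and l :: real
  assumes "l > 0" and "l \<noteq> 1"
  shows "complex_of_real (c_fun j (eta l))
           = complex_of_real (phi j l) - singular_part (phi_c j) 1 (complex_of_real l)"
  using c_fun_eq_phi_minus_sing[OF eta_nonzero[OF assms], of j] assms
  by (simp add: lam_eta phi_c_of_real)

end
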